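(* Let $n$ be a positive integer and $s\ge 64n$. There exists a subset of $\{0,1\}^s$ of size $2^n$ such that $\sum_{i=1}^s a_i(1-b_i)\ge s/8$ for any two different elements $a=(a_1,\dots,a_s)$ and $b=(b_1,\dots,b_s)$ of the subset. *)

theory Defs
  imports Complex_Main "HOL-Library.FuncSet"
begin

end

theory Submission
  imports Defs
begin

(* Put m = s div 2 and d = ceil(s/8). Greedily choosing subsets of {..<m} outside the
   Hamming balls of radius d - 1 around the previously chosen ones (Gilbert-Varshamov) yields
   2^n subsets with pairwise symmetric differences of size at least d, since each ball has
   volume sum_{i<d} (m choose i) <= 4^m / 3^(m-d+1) <= 2^(m-n). A subset A is then encoded as
   the indicator of A, followed by the indicator of its complement, padded with zeros: for two
   such words, the sum of a_i (1 - b_i) counts A - B on the first block and B - A on the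
   second, so it equals |A - B| + |B - A| >= d >= s/8. *)

lemma card_subsets_card_less:
  assumes "finite X"
  shows "card {D \<in> Pow X. card D < d} = (\<Sum>i<d. card X choose i)"
proof -
  have "{D \<in> Pow X. card D < d} = (\<Union>i<d. {D. D \<subseteq> X \<and> card D = i})" by auto
  also have "card \<dots> = (\<Sum>i<d. card {D. D \<subseteq> X \<and> card D = i})"
    by (rule card_UN_disjoint) (use assms in auto)
  also have "\<dots> = (\<Sum>i<d. card X choose i)"
    using n_subsets[OF assms] by simp
  finally show ?thesis .
qed

lemma card_Hamming_ball:
  assumes "A \<subseteq> X"
  shows "card {B \<in> Pow X. card (sym_diff A B) < d} = card {D \<in> Pow X. card D < d}"
proof (rule bij_betw_same_card)
  have involutive: "sym_diff A (sym_diff A B) = B" for B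
    by blast
  show "bij_betw (sym_diff A) {B \<in> Pow X. card (sym_diff A B) < d} {D \<in> Pow X. card D < d}"
    by (rule bij_betw_byWitness[where f' = "sym_diff A"]) (use assms in \<open>auto simp: involutive\<close>)
qed

lemma Gilbert_Varshamov_subsets:
  assumes "finite X" "0 < d" "M * card {D \<in> Pow X. card D < d} \<le> 2 ^ card X"
  shows "\<exists>C \<subseteq> Pow X. card C = M \<and> (\<forall>A\<in>C. \<forall>B\<in>C. A \<noteq> B \<longrightarrow> d \<le> card (sym_diff A B))"
  using assms(3)
proof (induction M)
  case 0
  show ?case by (intro exI[of _ "{}"]) auto
next
  case (Suc M)
  define V where "V = card {D \<in> Pow X. card D < d}"
  define ball where "ball A = {B \<in> Pow X. card (sym_diff A B) < d}" for A
  have "V > 0"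
    unfolding V_def using assms(1,2) by (subst card_gt_0_iff) auto
  then have "M * V \<le> 2 ^ card X"
    using Suc.prems unfolding V_def by simp
  then obtain C where C: "C \<subseteq> Pow X" "card C = M"
    and far: "\<forall>A\<in>C. \<forall>B\<in>C. A \<noteq> B \<longrightarrow> d \<le> card (sym_diff A B)"
    using Suc.IH unfolding V_def by blast
  have "finite C"
    using C(1) assms(1) by (simp add: finite_subset)
  have "card (\<Union>A\<in>C. ball A) \<le> (\<Sum>A\<in>C. card (ball A))"
    by (rule card_UN_le[OF \<open>finite C\<close>])
  also have "\<dots> = (\<Sum>A\<in>C. V)"
    using C(1) unfolding ball_def V_def by (intro sum.cong refl card_Hamming_ball) blast
  also have "\<dots> = M * V"
    using C(2) by simp
  also have "\<dots> < Suc M * V"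
    using \<open>V > 0\<close> by simp
  also have "\<dots> \<le> card (Pow X)"
    using Suc.prems assms(1) unfolding V_def by (simp add: card_Pow)
  finally have "(\<Union>A\<in>C. ball A) \<noteq> Pow X"
    by auto
  moreover have "(\<Union>A\<in>C. ball A) \<subseteq> Pow X"
    unfolding ball_def by blast
  ultimately obtain B where B: "B \<in> Pow X" "B \<notin> (\<Union>A\<in>C. ball A)"
    by blast
  then have B_far: "d \<le> card (sym_diff A B)" if "A \<in> C" for A
    using that C(1) unfolding ball_def by auto
  then have "B \<notin> C"
    using \<open>0 < d\<close> by fastforce
  show ?case
  proof (intro exI[of _ "insert B C"] conjI)
    show "card (insert B C) = Suc M"
      using \<open>finite C\<close> \<open>B \<notin> C\<close> C(2) by simp
  qed (use B C far B_far in \<open>auto simp: Un_commute\<close>)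
qed

lemma sum_binomial_mult_pow3_le: "(\<Sum>i<d. m choose i) * 3 ^ (m - (d - 1)) \<le> (4::nat) ^ m"
proof -
  have "(\<Sum>i<d. m choose i) * 3 ^ (m - (d - 1)) \<le> (\<Sum>i<d. (m choose i) * 3 ^ (m - i))"
    unfolding sum_distrib_right by (intro sum_mono mult_le_mono2 power_increasing) auto
  also have "\<dots> = (\<Sum>i\<in>{..<d} \<inter> {..m}. (m choose i) * 3 ^ (m - i))"
    by (rule sum.mono_neutral_right) auto
  also have "\<dots> \<le> (\<Sum>i\<le>m. (m choose i) * 3 ^ (m - i))"
    by (rule sum_mono2) auto
  also have "\<dots> = (1 + 3) ^ m"
    using binomial[of 1 3 m] by simp
  finally show ?thesis by simp
qed

lemma pow2_le_pow3:
  assumes "k \<le> 3 * (j div 2)"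
  shows "(2::nat) ^ k \<le> 3 ^ j"
proof -
  have "(2::nat) ^ k \<le> 2 ^ (3 * (j div 2))" using assms by (rule power_increasing) simp
  also have "\<dots> = 8 ^ (j div 2)" by (simp add: power_mult)
  also have "\<dots> \<le> 9 ^ (j div 2)" by (rule power_mono) auto
  also have "\<dots> = 3 ^ (2 * (j div 2))" by (simp add: power_mult)
  also have "\<dots> \<le> 3 ^ j" by (rule power_increasing) auto
  finally show ?thesis .
qed

lemma two_pow_mult_sum_binomial_le:
  fixes n s :: nat
  assumes "0 < n" "64 * n \<le> s"
  shows "2 ^ n * (\<Sum>i<(s + 7) div 8. s div 2 choose i) \<le> 2 ^ (s div 2)"
proof -
  define m where "m = s div 2"
  define d where "d = (s + 7) div 8"
  define V where "V = (\<Sum>i<d. m choose i)"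
  have "2 * m + 1 \<ge> s" "8 * d \<le> s + 7" "2 * ((m - (d - 1)) div 2) + 1 \<ge> m - (d - 1)"
    unfolding m_def d_def by auto
  then have "n + m \<le> 3 * ((m - (d - 1)) div 2)"
    using assms by linarith
  then have "2 ^ n * V * 2 ^ m \<le> V * 3 ^ (m - (d - 1))"
    by (simp add: power_add[symmetric] mult.commute pow2_le_pow3)
  also have "\<dots> \<le> 2 ^ m * 2 ^ m"
    using sum_binomial_mult_pow3_le[of m d] unfolding V_def by (simp add: power_mult_distrib[symmetric])
  finally show ?thesis
    unfolding V_def m_def d_def by simp
qed

definition code_word :: "nat \<Rightarrow> nat \<Rightarrow> nat set \<Rightarrow> nat \<Rightarrow> nat" where
  "code_word m s A = (\<lambda>i\<in>{0..<s}.
     if i < m then of_bool (i \<in> A) else if i < 2 * m then of_bool (i - m \<notin> A) else 0)"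

lemma code_word_in_PiE: "code_word m s A \<in> {0..<s} \<rightarrow>\<^sub>E {0, 1}"
  unfolding code_word_def restrict_PiE_iff by simp

lemma inj_on_code_word:
  assumes "m \<le> s"
  shows "inj_on (code_word m s) (Pow {..<m})"
proof (rule inj_onI)
  fix A B
  assume "A \<in> Pow {..<m}" "B \<in> Pow {..<m}" and eq: "code_word m s A = code_word m s B"
  have "i \<in> A \<longleftrightarrow> i \<in> B" if "i < m" for i
    using fun_cong[OF eq, of i] that assms by (simp add: code_word_def of_bool_eq_iff)
  with \<open>A \<in> Pow {..<m}\<close> \<open>B \<in> Pow {..<m}\<close> show "A = B"
    by blast
qed

lemma sum_code_word_mult_complement:
  assumes "2 * m \<le> s" "A \<subseteq> {..<m}" "B \<subseteq> {..<m}"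
  shows "(\<Sum>i<s. code_word m s A i * (1 - code_word m s B i)) = card (sym_diff A B)"
proof -
  define f where "f i = code_word m s A i * (1 - code_word m s B i)" for i
  have split: "{..<s} = {..<m} \<union> {m..<m + m} \<union> {2 * m..<s}"
    using assms(1) by auto
  have "(\<Sum>i<s. f i) = (\<Sum>i<m. f i) + (\<Sum>i\<in>{m..<m + m}. f i) + (\<Sum>i\<in>{2 * m..<s}. f i)"
    unfolding split by (subst sum.union_disjoint; auto)+
  also have "(\<Sum>i\<in>{2 * m..<s}. f i) = 0"
    by (rule sum.neutral) (auto simp: f_def code_word_def)
  also have "(\<Sum>i\<in>{m..<m + m}. f i) = (\<Sum>i<m. f (i + m))"
    using sum.shift_bounds_nat_ivl[of f 0 m m] by (simp add: atLeast0LessThan)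
  also have "(\<Sum>i<m. f i) + (\<Sum>i<m. f (i + m)) = (\<Sum>i<m. of_bool (i \<in> sym_diff A B))"
    unfolding sum.distrib[symmetric] using assms(1) by (intro sum.cong) (auto simp: f_def code_word_def)
  also have "\<dots> = card ({..<m} \<inter> {i. i \<in> sym_diff A B})"
    by (simp only: sum_of_bool_eq finite_lessThan of_nat_id)
  also have "{..<m} \<inter> {i. i \<in> sym_diff A B} = sym_diff A B"
    using assms(2,3) by auto
  finally show ?thesis
    by (simp add: f_def)
qed

lemma code_word_image:
  assumes "2 * m \<le> s" "C \<subseteq> Pow {..<m}"
    and far: "\<forall>A\<in>C. \<forall>B\<in>C. A \<noteq> B \<longrightarrow> d \<le> card (sym_diff A B)"
  shows "code_word m s ` C \<subseteq> {0..<s} \<rightarrow>\<^sub>E {0, 1}"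
    and "card (code_word m s ` C) = card C"
    and "\<forall>a\<in>code_word m s ` C. \<forall>b\<in>code_word m s ` C. a \<noteq> b \<longrightarrow> d \<le> (\<Sum>i<s. a i * (1 - b i))"
proof -
  show "code_word m s ` C \<subseteq> {0..<s} \<rightarrow>\<^sub>E {0, 1}"
    using code_word_in_PiE by (rule image_subsetI)
  show "card (code_word m s ` C) = card C"
    using inj_on_code_word[of m s] assms(1,2) by (simp add: card_image inj_on_subset)
  have "d \<le> (\<Sum>i<s. code_word m s A i * (1 - code_word m s B i))"
    if "A \<in> C" "B \<in> C" "A \<noteq> B" for A B
    using far that assms(1,2) by (subst sum_code_word_mult_complement) auto
  then show "\<forall>a\<in>code_word m s ` C. \<forall>b\<in>code_word m s ` C. a \<noteq> b \<longrightarrow> d \<le> (\<Sum>i<s. a i * (1 - b i))"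
    by blast
qed

theorem lemma3:
  fixes n s :: nat
  assumes "n > 0" and "s \<ge> 64 * n"
  shows "\<exists>C. C \<subseteq> ({0..<s} \<rightarrow>\<^sub>E {0::nat, 1}) \<and> card C = 2 ^ n \<and>
           (\<forall>a\<in>C. \<forall>b\<in>C. a \<noteq> b \<longrightarrow>
              real (\<Sum>i<s. a i * (1 - b i)) \<ge> real s / 8)"
proof -
  define m where "m = s div 2"
  define d where "d = (s + 7) div 8"
  have "2 * m \<le> s" "s \<le> 8 * d" "0 < d"
    using assms unfolding m_def d_def by auto
  have "2 ^ n * card {D \<in> Pow {..<m}. card D < d} \<le> 2 ^ card {..<m}"
    using two_pow_mult_sum_binomial_le[OF assms]
    unfolding m_def d_def by (simp only: card_subsets_card_less[OF finite_lessThan] card_lessThan)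
  then obtain C where "C \<subseteq> Pow {..<m}" "card C = 2 ^ n"
    and far: "\<forall>A\<in>C. \<forall>B\<in>C. A \<noteq> B \<longrightarrow> d \<le> card (sym_diff A B)"
    using Gilbert_Varshamov_subsets[of "{..<m}" d "2 ^ n"] \<open>0 < d\<close> by auto
  note code = code_word_image[OF \<open>2 * m \<le> s\<close> \<open>C \<subseteq> Pow {..<m}\<close> far]
  show ?thesis
  proof (intro exI[of _ "code_word m s ` C"] conjI ballI impI)
    fix a b
    assume "a \<in> code_word m s ` C" "b \<in> code_word m s ` C" "a \<noteq> b"
    with code(3) have "d \<le> (\<Sum>i<s. a i * (1 - b i))"
      by blast
    with \<open>s \<le> 8 * d\<close> show "real s / 8 \<le> real (\<Sum>i<s. a i * (1 - b i))"
      by linarith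
  qed (use code \<open>card C = 2 ^ n\<close> in auto)
qed

end
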